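(* For all multidistributions $\mu,\nu$ on configurations, real $w\ge0$, expectation $f$ and $c\in\{\mathit{true},\mathit{false}\}$: if $\mu\Rightarrow_w\nu$ (one step of the lifted relation on multidistributions), then \[ \mathbb{E}_\mu(e_c(f)) \;\ge\; [c]\cdot w + \mathbb{E}_\nu(e_c(f)). \]
   Context: Let $\mathrm{Var}$ be a finite set of integer-valued variables and $\Sigma = \mathrm{Var}\to\mathbb{Z}$ the set of stores; $\sigma[x\mapsto i]$ is the store updated at $x$. Boolean expressions $\varphi$ are evaluated on stores ($\sigma\models\varphi$). A distribution expression $d$ assigns to each store $\sigma$ a probability distribution $d(\sigma)$ on $\mathbb{Z}$. Commands: $C,D ::= \mathtt{skip} \mid \mathtt{tick}(r) \mid \mathtt{halt} \mid x :\approx d \mid \mathtt{if}_{[\psi]}(\varphi)\{C\}\{D\} \mid \mathtt{while}_{[\psi]}(\varphi)\{C\} \mid C \,\square\, D \mid C \oplus_p D \mid C;D$, with $r$ a nonnegative rational, $p\in[0,1]$. Expectations are functions $f:\Sigma\to[0,\infty]$, with pointwise operations, $\mathbf{r}$ the constant $r$, $[\varphi](\sigma)\in\{0,1\}$ the indicator, $[c]=1$ if $c=\mathit{true}$ and $0$ otherwise, $0\cdot\infty=0$. Transformer $\mathsf{et}_c$: $\mathsf{et}_c[\mathtt{skip}](f)=f$; $\mathsf{et}_c[\mathtt{tick}(r)](f)=[c]\cdot\mathbf{r}+f$; $\mathsf{et}_c[\mathtt{halt}](f)=\mathbf{0}$; $\mathsf{et}_c[x:\approx d](f)=\lambda\sigma.\sum_{i}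 d(\sigma)(i)\, f(\sigma[x\mapsto i])$; $\mathsf{et}_c[\mathtt{if}_{[\psi]}(\varphi)\{C\}\{D\}](f)=[\psi\wedge\varphi]\cdot\mathsf{et}_c[C](f)+[\psi\wedge\neg\varphi]\cdot\mathsf{et}_c[D](f)$; $\mathsf{et}_c[\mathtt{while}_{[\psi]}(\varphi)\{C\}](f)=\mathrm{lfp}\,F.\ [\psi\wedge\varphi]\cdot\mathsf{et}_c[C](F)+[\psi\wedge\neg\varphi]\cdot f$ (least fixed point, pointwise order); $\mathsf{et}_c[C\,\square\,D](f)=\max(\mathsf{et}_c[C](f),\mathsf{et}_c[D](f))$; $\mathsf{et}_c[C\oplus_p D](f)=\mathbf{p}\cdot\mathsf{et}_c[C](f)+\mathbf{(1-p)}\cdot\mathsf{et}_c[D](f)$; $\mathsf{et}_c[C;D](f)=\mathsf{et}_c[C](\mathsf{et}_c[D](f))$. Configurations: $\mathrm{Conf}=(\mathrm{Cmd}\times\Sigma)\cup\Sigma\cup\{\bot\}$; an active configuration is written $\langle C,\sigma\rangle$. A multidistribution on a set $A$ is a countable multiset $\mu$ of pairs $q:a$ with $a\in A$, $0<q\le1$, and $\sum_{q:a\in\mu}q\le1$; $\mathbb{E}_\mu(g)=\sum_{q:a\in\mu}q\cdot g(a)$ (with multiplicity). For $0<p\le1$, $p\cdot\{q_i:a_i\}_i=\{p q_i:a_i\}_i$, and for a countable family with $p_i>0$, $\sum_ip_i\le1$, $\biguplus_i p_i\cdot\mu_i$ is the multiset union of the $p_i\cdot\mu_i$. For $h:A\to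 B$, $\overline h(\{q_i:a_i\}_i)=\{q_i:h(a_i)\}_i$. A configuration $\gamma$ is identified with $\{1:\gamma\}$; entries with probability $0$ are omitted. The one-step relation $\gamma\to_w\mu$ is the least relation closed under: $\langle\mathtt{skip},\sigma\rangle\to_0\sigma$; $\langle\mathtt{tick}(r),\sigma\rangle\to_r\sigma$; $\langle\mathtt{halt},\sigma\rangle\to_0\bot$; $\langle x:\approx d,\sigma\rangle\to_0\{d(\sigma)(i):\sigma[x\mapsto i]\mid d(\sigma)(i)>0\}$; $\langle\mathtt{if}_{[\psi]}(\varphi)\{C\}\{D\},\sigma\rangle\to_0\langle C,\sigma\rangle$ if $\sigma\models\psi\wedge\varphi$, $\to_0\langle D,\sigma\rangle$ if $\sigma\models\psi\wedge\neg\varphi$, $\to_0\bot$ if $\sigma\models\neg\psi$; $\langle\mathtt{while}_{[\psi]}(\varphi)\{C\},\sigma\rangle\to_0\langle C;\mathtt{while}_{[\psi]}(\varphi)\{C\},\sigma\rangle$ if $\sigma\models\psi\wedge\varphi$, $\to_0\sigma$ if $\sigma\models\psi\wedge\neg\varphi$, $\to_0\bot$ if $\sigma\models\neg\psi$; $\langle C\,\square\,D,\sigma\rangle\to_0\langle C,\sigma\rangle$ and $\to_0\langle D,\sigma\rangle$; $\langle C\oplus_pD,\sigma\rangle\to_0\{p:\langle C,\sigma\rangle,1-p:\langle D,\sigma\rangle\}$; if $\langle C,\sigma\rangle\to_r\mu$ then $\langle C;D,\sigma\rangle\to_r\overline{\kappa_D}(\mu)$, where $\kappa_D(\langle C',\sigma'\rangle)=\langle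 C';D,\sigma'\rangle$, $\kappa_D(\sigma')=\langle D,\sigma'\rangle$, $\kappa_D(\bot)=\bot$. The lifted relation $\mu\Rightarrow_w\nu$ on multidistributions is the least relation with: $\mu\Rightarrow_0\mu$; $\{1:\gamma\}\Rightarrow_w\mu$ whenever $\gamma\to_w\mu$; and if $\mu_i\Rightarrow_{w_i}\nu_i$ for all $i$ in a countable index set $I$, $p_i>0$, $\sum_ip_i\le1$, then $\biguplus_ip_i\cdot\mu_i\Rightarrow_{w}\biguplus_ip_i\cdot\nu_i$ with $w=\sum_ip_iw_i$. For an expectation $f$, $e_c(f):\mathrm{Conf}\to[0,\infty]$ is defined by $e_c(f)(\langle C,\sigma\rangle)=\mathsf{et}_c[C](f)(\sigma)$, $e_c(f)(\sigma)=f(\sigma)$, $e_c(f)(\bot)=0$. *)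

theory Defs
  imports "HOL-Analysis.Analysis" "HOL-Probability.Probability_Mass_Function"
begin

type_synonym 'v store = "'v \<Rightarrow> int"

datatype 'v cmd =
    Skip
  | Tick rat
  | Halt
  | Assign 'v "'v store \<Rightarrow> int pmf"
  | If "'v store \<Rightarrow> bool" "'v store \<Rightarrow> bool" "'v cmd" "'v cmd"
  | While "'v store \<Rightarrow> bool" "'v store \<Rightarrow> bool" "'v cmd"
  | NDet "'v cmd" "'v cmd"
  | PChoice "'v cmd" real "'v cmd"
  | Seq "'v cmd" "'v cmd"

fun wf_cmd :: "'v cmd \<Rightarrow> bool" where
  "wf_cmd Skip = True"
| "wf_cmd (Tick r) = (r \<ge> 0)"
| "wf_cmd Halt = True"
| "wf_cmd (Assign x d) = True"
| "wf_cmd (If \<psi> \<phi> C D) = (wf_cmd C \<and> wf_cmd D)"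
| "wf_cmd (While \<psi> \<phi> C) = wf_cmd C"
| "wf_cmd (NDet C D) = (wf_cmd C \<and> wf_cmd D)"
| "wf_cmd (PChoice C p D) = (0 \<le> p \<and> p \<le> 1 \<and> wf_cmd C \<and> wf_cmd D)"
| "wf_cmd (Seq C D) = (wf_cmd C \<and> wf_cmd D)"

type_synonym 'v expect = "'v store \<Rightarrow> ennreal"

definition ind :: "bool \<Rightarrow> ennreal" where
  "ind b = (if b then 1 else 0)"

primrec et :: "bool \<Rightarrow> 'v cmd \<Rightarrow> 'v expect \<Rightarrow> 'v expect" where
  "et c Skip f = f"
| "et c (Tick r) f = (\<lambda>\<sigma>. ind c * ennreal (real_of_rat r) + f \<sigma>)"
| "et c Halt f = (\<lambda>\<sigma>. 0)"
| "et c (Assign x d) f =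
     (\<lambda>\<sigma>. \<Sum>\<^sub>\<infinity> i. ennreal (pmf (d \<sigma>) i) * f (\<sigma>(x := i)))"
| "et c (If \<psi> \<phi> C D) f =
     (\<lambda>\<sigma>. ind (\<psi> \<sigma> \<and> \<phi> \<sigma>) * et c C f \<sigma> + ind (\<psi> \<sigma> \<and> \<not> \<phi> \<sigma>) * et c D f \<sigma>)"
| "et c (While \<psi> \<phi> C) f =
     lfp (\<lambda>F. \<lambda>\<sigma>. ind (\<psi> \<sigma> \<and> \<phi> \<sigma>) * et c C F \<sigma> + ind (\<psi> \<sigma> \<and> \<not> \<phi> \<sigma>) * f \<sigma>)"
| "et c (NDet C D) f = (\<lambda>\<sigma>. max (et c C f \<sigma>) (et c D f \<sigma>))"
| "et c (PChoice C p D) f =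
     (\<lambda>\<sigma>. ennreal p * et c C f \<sigma> + ennreal (1 - p) * et c D f \<sigma>)"
| "et c (Seq C D) f = et c C (et c D f)"

datatype 'v conf = Active "'v cmd" "'v store" | Term "'v store" | Bot

fun wf_conf :: "'v conf \<Rightarrow> bool" where
  "wf_conf (Active C \<sigma>) = wf_cmd C"
| "wf_conf (Term \<sigma>) = True"
| "wf_conf Bot = True"

text \<open>A countable multiset of pairs q:a is represented by its multiplicity function
  (each pair has finite multiplicity since q > 0 and the total mass is at most 1).\<close>
type_synonym 'a md = "real \<times> 'a \<Rightarrow> nat"

definition is_mdist :: "'a md \<Rightarrow> bool" where
  "is_mdist m \<longleftrightarrow>
     (\<forall>q a. m (q, a) > 0 \<longrightarrow> 0 < q \<and> q \<le> 1) \<and>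
     (\<lambda>x. real (m x) * fst x) summable_on UNIV \<and>
     (\<Sum>\<^sub>\<infinity> x. real (m x) * fst x) \<le> 1"

definition mdist_conf :: "'v conf md \<Rightarrow> bool" where
  "mdist_conf m \<longleftrightarrow> is_mdist m \<and> (\<forall>q a. m (q, a) > 0 \<longrightarrow> wf_conf a)"

definition md_exp :: "'a md \<Rightarrow> ('a \<Rightarrow> ennreal) \<Rightarrow> ennreal" where
  "md_exp m g = (\<Sum>\<^sub>\<infinity> x. of_nat (m x) * ennreal (fst x) * g (snd x))"

definition md_unit :: "'a \<Rightarrow> 'a md" where
  "md_unit a = (\<lambda>(q, b). if q = 1 \<and> b = a then 1 else 0)"

definition md_pair :: "real \<Rightarrow> 'a \<Rightarrow> 'a \<Rightarrow> 'a md" where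
  "md_pair p a b = (\<lambda>(q, x).
     (if p > 0 \<and> q = p \<and> x = a then 1 else 0) +
     (if 1 - p > 0 \<and> q = 1 - p \<and> x = b then 1 else 0))"

definition md_map :: "('a \<Rightarrow> 'b) \<Rightarrow> 'a md \<Rightarrow> 'b md" where
  "md_map h m = (\<lambda>(q, b). \<Sum>\<^sub>\<infinity> a\<in>{a. h a = b}. m (q, a))"

text \<open>\<open>\<Uplus>\<^sub>i\<in>I p\<^sub>i \<cdot> \<mu>\<^sub>i\<close>: the entry q:a of \<open>\<mu>\<^sub>i\<close> becomes \<open>p\<^sub>i q : a\<close>.\<close>
definition md_union :: "nat set \<Rightarrow> (nat \<Rightarrow> real) \<Rightarrow> (nat \<Rightarrow> 'a md) \<Rightarrow> 'a md" where
  "md_union I p M = (\<lambda>(q, a). \<Sum>\<^sub>\<infinity> i\<in>I. M i (q / p i, a))"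

fun kappa :: "'v cmd \<Rightarrow> 'v conf \<Rightarrow> 'v conf" where
  "kappa D (Active C' \<sigma>') = Active (Seq C' D) \<sigma>'"
| "kappa D (Term \<sigma>') = Active D \<sigma>'"
| "kappa D Bot = Bot"

inductive cstep :: "'v conf \<Rightarrow> real \<Rightarrow> 'v conf md \<Rightarrow> bool" where
  skip: "cstep (Active Skip \<sigma>) 0 (md_unit (Term \<sigma>))"
| tick: "cstep (Active (Tick r) \<sigma>) (real_of_rat r) (md_unit (Term \<sigma>))"
| halt: "cstep (Active Halt \<sigma>) 0 (md_unit Bot)"
| assign: "cstep (Active (Assign x d) \<sigma>) 0
     (\<lambda>(q, a). card {i. pmf (d \<sigma>) i > 0 \<and> q = pmf (d \<sigma>) i \<and> a = Term (\<sigma>(x := i))})"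
| if_t: "\<psi> \<sigma> \<and> \<phi> \<sigma> \<Longrightarrow> cstep (Active (If \<psi> \<phi> C D) \<sigma>) 0 (md_unit (Active C \<sigma>))"
| if_f: "\<psi> \<sigma> \<and> \<not> \<phi> \<sigma> \<Longrightarrow> cstep (Active (If \<psi> \<phi> C D) \<sigma>) 0 (md_unit (Active D \<sigma>))"
| if_bot: "\<not> \<psi> \<sigma> \<Longrightarrow> cstep (Active (If \<psi> \<phi> C D) \<sigma>) 0 (md_unit Bot)"
| while_t: "\<psi> \<sigma> \<and> \<phi> \<sigma> \<Longrightarrow>
     cstep (Active (While \<psi> \<phi> C) \<sigma>) 0 (md_unit (Active (Seq C (While \<psi> \<phi> C)) \<sigma>))"
| while_f: "\<psi> \<sigma> \<and> \<not> \<phi> \<sigma> \<Longrightarrow> cstep (Active (While \<psi> \<phi> C) \<sigma>) 0 (md_unit (Term \<sigma>))"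
| while_bot: "\<not> \<psi> \<sigma> \<Longrightarrow> cstep (Active (While \<psi> \<phi> C) \<sigma>) 0 (md_unit Bot)"
| ndet_l: "cstep (Active (NDet C D) \<sigma>) 0 (md_unit (Active C \<sigma>))"
| ndet_r: "cstep (Active (NDet C D) \<sigma>) 0 (md_unit (Active D \<sigma>))"
| pchoice: "cstep (Active (PChoice C p D) \<sigma>) 0 (md_pair p (Active C \<sigma>) (Active D \<sigma>))"
| seq: "cstep (Active C \<sigma>) r \<mu> \<Longrightarrow> cstep (Active (Seq C D) \<sigma>) r (md_map (kappa D) \<mu>)"

inductive lstep :: "'v conf md \<Rightarrow> real \<Rightarrow> 'v conf md \<Rightarrow> bool" where
  refl: "is_mdist \<mu> \<Longrightarrow> lstep \<mu> 0 \<mu>"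
| single: "cstep \<gamma> w \<mu> \<Longrightarrow> lstep (md_unit \<gamma>) w \<mu>"
| union: "\<lbrakk>\<forall>i\<in>I. lstep (M i) (W i) (N i); \<forall>i\<in>I. p i > 0;
           p summable_on I; (\<Sum>\<^sub>\<infinity> i\<in>I. p i) \<le> 1;
           ((\<lambda>i. p i * W i) has_sum w) I\<rbrakk>
          \<Longrightarrow> lstep (md_union I p M) w (md_union I p N)"

fun econf :: "bool \<Rightarrow> 'v expect \<Rightarrow> 'v conf \<Rightarrow> ennreal" where
  "econf c f (Active C \<sigma>) = et c C f \<sigma>"
| "econf c f (Term \<sigma>) = f \<sigma>"
| "econf c f Bot = 0"

end

theory Submission
  imports Defs
begin

(* A configuration step does not increase the expected cost: each rule of the small-step
   semantics matches a defining equation of et (while via the fixed-point unfolding, sequencing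
   because kappa D is injective and e_c(f) o kappa D = e_c(et_c D f)); only nondeterministic choice
   loses something. A union of the p_i * mu_i has expectation at most sum_i p_i E_mu_i, with
   equality when every entry q:a of the union receives contributions from only finitely many
   components. This holds for the source of a lifted step: its probabilities are at most 1, so
   only the finitely many i with p_i >= q contribute. Subadditivity of ennreal finally bounds the
   cost sum_i p_i w_i, whose terms need not be nonnegative. *)

(* The library lemma summable_on_ennreal is stated, after coercion insertion, for ennreal_of_enat o f. *)
lemma summable_on_ennreal' [simp]: "(f :: _ \<Rightarrow> ennreal) summable_on A"
  by (simp add: nonneg_summable_on_complete)

lemma infsum_ennreal_SUP:
  "infsum (f :: _ \<Rightarrow> ennreal) A = (SUP F\<in>{F. finite F \<and> F \<subseteq> A}. sum f F)"
  by (rule nonneg_infsum_complete) simp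

lemma infsum_cmult_right_ennreal: "infsum (\<lambda>x. c * f x) A = c * (infsum f A :: ennreal)"
  unfolding infsum_ennreal_SUP by (simp add: SUP_mult_left_ennreal sum_distrib_left)

lemma infsum_cmult_left_ennreal: "infsum (\<lambda>x. f x * c) A = (infsum f A :: ennreal) * c"
  using infsum_cmult_right_ennreal[of c f A] by (simp add: mult.commute)

lemma sum_le_infsum_ennreal: "finite F \<Longrightarrow> F \<subseteq> A \<Longrightarrow> sum (f :: _ \<Rightarrow> ennreal) F \<le> infsum f A"
  unfolding infsum_ennreal_SUP by (rule SUP_upper) auto

lemma infsum_mono_ennreal:
  "(\<And>x. x \<in> A \<Longrightarrow> f x \<le> g x) \<Longrightarrow> infsum (f :: _ \<Rightarrow> ennreal) A \<le> infsum g A"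
  by (rule infsum_mono) simp_all

lemma sum_infsum_ennreal:
  "finite F \<Longrightarrow> (\<Sum>i\<in>F. infsum (f i) A) = infsum (\<lambda>x. \<Sum>i\<in>F. f i x :: ennreal) A"
  by (induct F rule: finite_induct) (simp_all add: infsum_add)

lemma infsum_swap_ennreal:
  fixes f :: "'a \<Rightarrow> 'b \<Rightarrow> ennreal"
  shows "infsum (\<lambda>i. infsum (f i) B) A = infsum (\<lambda>x. infsum (\<lambda>i. f i x) A) B"
proof -
  have le: "infsum (\<lambda>i. infsum (g i) B) A \<le> infsum (\<lambda>x. infsum (\<lambda>i. g i x) A) B"
    for A B and g :: "'c \<Rightarrow> 'd \<Rightarrow> ennreal"
    unfolding infsum_ennreal_SUP[of "\<lambda>i. infsum (g i) B"]
  proof (rule SUP_least, safe)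
    fix F assume F: "finite F" "F \<subseteq> A"
    have "(\<Sum>i\<in>F. infsum (g i) B) = infsum (\<lambda>x. \<Sum>i\<in>F. g i x) B"
      using F(1) by (rule sum_infsum_ennreal)
    also have "\<dots> \<le> infsum (\<lambda>x. infsum (\<lambda>i. g i x) A) B"
      using F by (intro infsum_mono_ennreal sum_le_infsum_ennreal)
    finally show "(\<Sum>i\<in>F. infsum (g i) B) \<le> infsum (\<lambda>x. infsum (\<lambda>i. g i x) A) B" .
  qed
  show ?thesis
    using le[of f B A] le[of "\<lambda>x i. f i x" A B] by (rule antisym)
qed

lemma ennreal_sum_le_sum_ennreal: "ennreal (sum x F) \<le> (\<Sum>i\<in>F. ennreal (x i))"
proof (induct F rule: infinite_finite_induct)
  case (insert a F)
  have "ennreal (x a + sum x F) \<le> ennreal (x a) + ennreal (sum x F)"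
    by (auto simp: ennreal_plus_if ennreal_le_iff2)
  with insert show ?case
    by (simp add: order_trans add_left_mono)
qed simp_all

lemma ennreal_le_infsum_of_has_sum:
  fixes x :: "'a \<Rightarrow> real"
  assumes "(x has_sum w) I"
  shows "ennreal w \<le> infsum (\<lambda>i. ennreal (x i)) I"
proof (rule tendsto_le[OF finite_subsets_at_top_neq_bot tendsto_const])
  show "((\<lambda>F. ennreal (sum x F)) \<longlongrightarrow> ennreal w) (finite_subsets_at_top I)"
    using assms unfolding has_sum_def by (rule tendsto_ennrealI)
  show "\<forall>\<^sub>F F in finite_subsets_at_top I. ennreal (sum x F) \<le> infsum (\<lambda>i. ennreal (x i)) I"
    by (rule eventually_finite_subsets_at_top_weakI)
       (metis ennreal_sum_le_sum_ennreal sum_le_infsum_ennreal order_trans)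
qed

lemma finite_ge_of_summable_pos:
  fixes p :: "'a \<Rightarrow> real"
  assumes "p summable_on I" "\<forall>i\<in>I. p i > 0" "q > 0"
  shows "finite {i\<in>I. q \<le> p i}"
proof (rule ccontr)
  assume "infinite {i\<in>I. q \<le> p i}"
  obtain n :: nat where n: "infsum p I / q < n"
    using reals_Archimedean2 by blast
  obtain B where B: "finite B" "card B = n" "B \<subseteq> {i\<in>I. q \<le> p i}"
    using infinite_arbitrarily_large[OF \<open>infinite _\<close>] by blast
  have "n * q \<le> sum p B"
    using sum_bounded_below[of B q p] B by auto
  also have "\<dots> \<le> infsum p I"
    using assms B by (intro finite_sum_le_infsum) (auto intro: less_imp_le)
  finally show False
    using n assms(3) by (simp add: divide_less_eq)
qed

lemma of_nat_infsum_ennreal: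
  fixes h :: "'a \<Rightarrow> nat"
  assumes "finite {i\<in>I. h i \<noteq> 0}"
  shows "of_nat (infsum h I) = infsum (\<lambda>i. of_nat (h i) :: ennreal) I"
proof -
  let ?S = "{i\<in>I. h i \<noteq> 0}"
  have "infsum h I = sum h ?S" "infsum (\<lambda>i. of_nat (h i) :: ennreal) I = (\<Sum>i\<in>?S. of_nat (h i))"
    using assms by (subst infsum_cong_neutral[where T = ?S]; auto)+
  then show ?thesis by simp
qed

lemma of_nat_infsum_le_ennreal:
  fixes h :: "'a \<Rightarrow> nat"
  shows "of_nat (infsum h I) \<le> infsum (\<lambda>i. of_nat (h i) :: ennreal) I"
proof (cases "finite {i\<in>I. h i \<noteq> 0}")
  case True
  then show ?thesis by (simp add: of_nat_infsum_ennreal)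
next
  case False
  have "\<infinity> = infsum (\<lambda>i. of_nat (h i) :: ennreal) {i\<in>I. h i \<noteq> 0}"
    using False by (intro infsum_superconst_infinite_ennreal[where b = 1, symmetric]) auto
  also have "\<dots> \<le> infsum (\<lambda>i. of_nat (h i)) I"
    by (rule infsum_mono_neutral) auto
  finally show ?thesis by (simp add: top_unique)
qed

lemma md_exp_point:
  "md_exp (\<lambda>y. if P \<and> y = (q, a) then 1 else 0) g = (if P then ennreal q * g a else 0)"
proof -
  have "md_exp (\<lambda>y. if P \<and> y = (q, a) then 1 else 0) g
      = infsum (\<lambda>x. of_nat (if P \<and> x = (q, a) then 1 else 0) * ennreal (fst x) * g (snd x)) {(q, a)}"
    unfolding md_exp_def by (rule infsum_cong_neutral) auto
  then show ?thesis by simp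
qed

lemma md_exp_unit: "md_exp (md_unit a) g = g a"
proof -
  have "md_unit a = (\<lambda>y. if True \<and> y = (1, a) then 1 else 0)"
    by (auto simp: md_unit_def fun_eq_iff)
  then show ?thesis using md_exp_point[of True 1 a g] by simp
qed

lemma md_exp_add: "md_exp (\<lambda>y. m1 y + m2 y) g = md_exp m1 g + md_exp m2 g"
  unfolding md_exp_def by (simp add: distrib_right infsum_add)

lemma md_exp_pair: "md_exp (md_pair p a b) g = ennreal p * g a + ennreal (1 - p) * g b"
proof -
  have "md_pair p a b = (\<lambda>y. (if p > 0 \<and> y = (p, a) then 1 else 0)
                            + (if 1 - p > 0 \<and> y = (1 - p, b) then 1 else 0))"
    by (auto simp: md_pair_def fun_eq_iff)
  then show ?thesis by (simp add: md_exp_add md_exp_point ennreal_neg)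
qed

lemma md_exp_rescale:
  assumes "s > 0"
  shows "infsum (\<lambda>x. of_nat (m (fst x / s, snd x)) * ennreal (fst x) * g (snd x)) UNIV
         = ennreal s * md_exp m g"
proof -
  have "infsum (\<lambda>x. of_nat (m (fst x / s, snd x)) * ennreal (fst x) * g (snd x)) UNIV
      = infsum (\<lambda>y. of_nat (m y) * ennreal (s * fst y) * g (snd y)) UNIV"
    by (rule infsum_reindex_bij_witness[of UNIV "\<lambda>y. (s * fst y, snd y)" "\<lambda>x. (fst x / s, snd x)"])
       (use assms in auto)
  also have "\<dots> = infsum (\<lambda>y. ennreal s * (of_nat (m y) * ennreal (fst y) * g (snd y))) UNIV"
    using assms by (simp add: ennreal_mult' mult_ac)
  finally show ?thesis
    unfolding md_exp_def by (simp add: infsum_cmult_right_ennreal)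
qed

lemma md_exp_union_components:
  assumes "\<forall>i\<in>I. p i > 0"
  shows "infsum (\<lambda>x. infsum (\<lambda>i. of_nat (m i (fst x / p i, snd x))) I * ennreal (fst x) * g (snd x)) UNIV
         = infsum (\<lambda>i. ennreal (p i) * md_exp (m i) g) I"
proof -
  have "infsum (\<lambda>x. infsum (\<lambda>i. of_nat (m i (fst x / p i, snd x))) I * ennreal (fst x) * g (snd x)) UNIV
      = infsum (\<lambda>x. infsum (\<lambda>i. of_nat (m i (fst x / p i, snd x)) * ennreal (fst x) * g (snd x)) I) UNIV"
    by (simp add: infsum_cmult_left_ennreal)
  also have "\<dots> = infsum (\<lambda>i. infsum (\<lambda>x. of_nat (m i (fst x / p i, snd x)) * ennreal (fst x) * g (snd x)) UNIV) I"
    by (rule infsum_swap_ennreal[symmetric])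
  also have "\<dots> = infsum (\<lambda>i. ennreal (p i) * md_exp (m i) g) I"
    using assms by (intro infsum_cong) (simp add: md_exp_rescale)
  finally show ?thesis .
qed

(* md_union counts multiplicities by a nat-valued infsum, which is 0 when infinitely many
   components contribute; hence only an inequality in general. *)
lemma md_exp_union_le:
  assumes "\<forall>i\<in>I. p i > 0"
  shows "md_exp (md_union I p m) g \<le> infsum (\<lambda>i. ennreal (p i) * md_exp (m i) g) I"
proof -
  have "md_exp (md_union I p m) g
      \<le> infsum (\<lambda>x. infsum (\<lambda>i. of_nat (m i (fst x / p i, snd x))) I * ennreal (fst x) * g (snd x)) UNIV"
    unfolding md_exp_def md_union_def
    by (rule infsum_mono_ennreal) (auto intro!: mult_right_mono of_nat_infsum_le_ennreal)
  then show ?thesis using md_exp_union_components[OF assms, where m = m and g = g] by simp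
qed

lemma md_exp_union:
  assumes "\<forall>i\<in>I. p i > 0" and "\<And>q a. finite {i\<in>I. m i (q / p i, a) \<noteq> 0}"
  shows "md_exp (md_union I p m) g = infsum (\<lambda>i. ennreal (p i) * md_exp (m i) g) I"
proof -
  have "md_exp (md_union I p m) g
      = infsum (\<lambda>x. infsum (\<lambda>i. of_nat (m i (fst x / p i, snd x))) I * ennreal (fst x) * g (snd x)) UNIV"
    unfolding md_exp_def md_union_def
    by (rule infsum_cong) (simp add: case_prod_beta of_nat_infsum_ennreal[OF assms(2)])
  then show ?thesis using md_exp_union_components[OF assms(1), where m = m and g = g] by simp
qed

lemma md_exp_map_inj:
  assumes "inj h"
  shows "md_exp (md_map h m) g = md_exp m (\<lambda>a. g (h a))"
proof -
  let ?j = "\<lambda>(q :: real, a). (q, h a)"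
  have map_in_range: "md_map h m (q, h a) = m (q, a)" for q a
  proof -
    have "{a'. h a' = h a} = {a}" using assms by (auto dest: injD)
    then show ?thesis by (simp add: md_map_def)
  qed
  have map_outside_range: "md_map h m (q, b) = 0" if "b \<notin> range h" for q b
    using that by (auto simp: md_map_def intro!: infsum_0)
  have "inj ?j" using assms by (auto simp: inj_def)
  have "md_exp (md_map h m) g
      = infsum (\<lambda>x. of_nat (md_map h m x) * ennreal (fst x) * g (snd x)) (range ?j)"
    unfolding md_exp_def by (rule infsum_cong_neutral) (auto simp: map_outside_range image_iff)
  also have "\<dots> = infsum ((\<lambda>x. of_nat (md_map h m x) * ennreal (fst x) * g (snd x)) \<circ> ?j) UNIV"
    using \<open>inj ?j\<close> by (simp add: infsum_reindex)
  also have "\<dots> = md_exp m (\<lambda>a. g (h a))"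
    unfolding md_exp_def by (rule infsum_cong) (auto simp: map_in_range case_prod_beta)
  finally show ?thesis .
qed

lemma md_exp_pmf_image:
  assumes "inj h"
  shows "md_exp (\<lambda>(q, a). card {i. pmf d i > 0 \<and> q = pmf d i \<and> a = h i}) g
         = (\<Sum>\<^sub>\<infinity>i. ennreal (pmf d i) * g (h i))"
    (is "md_exp ?m g = _")
proof -
  let ?j = "\<lambda>i. (pmf d i, h i)"
  let ?S = "{i. pmf d i > 0}"
  have "inj ?j" using assms by (auto simp: inj_def)
  have m_on_image: "card {i'. 0 < pmf d i' \<and> pmf d i = pmf d i' \<and> h i = h i'} = 1" if "i \<in> ?S" for i
  proof -
    have "{i'. 0 < pmf d i' \<and> pmf d i = pmf d i' \<and> h i = h i'} = {i}"
      using that assms by (auto dest: injD)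
    then show ?thesis by simp
  qed
  have m_outside_image: "?m y = 0" if "y \<notin> ?j ` ?S" for y
    using that by (cases y) (auto simp: image_iff card_eq_0_iff)
  have "md_exp ?m g = infsum (\<lambda>y. of_nat (?m y) * ennreal (fst y) * g (snd y)) (?j ` ?S)"
    unfolding md_exp_def by (rule infsum_cong_neutral) (use m_outside_image in auto)
  also have "\<dots> = infsum ((\<lambda>y. of_nat (?m y) * ennreal (fst y) * g (snd y)) \<circ> ?j) ?S"
    using \<open>inj ?j\<close> by (simp add: infsum_reindex inj_on_subset)
  also have "\<dots> = infsum (\<lambda>i. ennreal (pmf d i) * g (h i)) ?S"
    by (rule infsum_cong) (simp add: m_on_image)
  also have "\<dots> = (\<Sum>\<^sub>\<infinity>i. ennreal (pmf d i) * g (h i))"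
    by (rule infsum_cong_neutral) (auto simp: not_less)
  finally show ?thesis .
qed

lemma et_mono: "f \<le> g \<Longrightarrow> et c C f \<le> et c C g"
proof (induction C arbitrary: f g)
  case (While \<psi> \<phi> C)
  then show ?case
    unfolding et.simps
    by (intro lfp_mono) (auto simp: le_fun_def intro!: add_mono mult_left_mono)
next
  case (NDet C D)
  then have "et c C f \<le> et c C g" "et c D f \<le> et c D g"
    by blast+
  then show ?case
    unfolding le_fun_def et.simps by (metis max.mono)
qed (auto simp: le_fun_def intro!: add_mono mult_left_mono infsum_mono_ennreal)

lemma et_while_unfold:
  "et c (While \<psi> \<phi> C) f \<sigma>
   = ind (\<psi> \<sigma> \<and> \<phi> \<sigma>) * et c C (et c (While \<psi> \<phi> C) f) \<sigma> + ind (\<psi> \<sigma> \<and> \<not> \<phi> \<sigma>) * f \<sigma>"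
proof -
  let ?F = "\<lambda>F \<sigma>. ind (\<psi> \<sigma> \<and> \<phi> \<sigma>) * et c C F \<sigma> + ind (\<psi> \<sigma> \<and> \<not> \<phi> \<sigma>) * f \<sigma>"
  have "mono ?F"
  proof (rule monoI)
    fix F G :: "'a expect" assume "F \<le> G"
    then show "?F F \<le> ?F G"
      using et_mono[of F G c C] by (auto simp: le_fun_def intro!: add_mono mult_left_mono)
  qed
  then have "lfp ?F = ?F (lfp ?F)" by (rule lfp_unfold)
  then show ?thesis by (simp add: fun_eq_iff)
qed

lemma inj_kappa: "inj (kappa D)"
proof (rule injI)
  fix a b assume "kappa D a = kappa D b"
  moreover have "Seq C D \<noteq> D" for C
  proof
    assume "Seq C D = D"
    then have "size (Seq C D) = size D" by simp
    then show False by simp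
  qed
  ultimately show "a = b"
    by (cases a; cases b) (auto simp: eq_commute[of D])
qed

lemma econf_kappa: "econf c f (kappa D a) = econf c (et c D f) a"
  by (cases a) auto

lemma cstep_sound:
  "cstep \<gamma> r \<mu> \<Longrightarrow> ind c * ennreal r + md_exp \<mu> (econf c f) \<le> econf c f \<gamma>"
proof (induction arbitrary: f rule: cstep.induct)
  case (assign x d \<sigma>)
  have "inj (\<lambda>i. Term (\<sigma>(x := i)))"
    by (rule injI) (metis conf.inject(2) fun_upd_same)
  then show ?case by (simp add: md_exp_pmf_image)
next
  case (while_t \<psi> \<sigma> \<phi> C)
  then show ?case by (simp add: md_exp_unit ind_def et_while_unfold[of c \<psi> \<phi> C f \<sigma>] del: et.simps(6))
next
  case (while_f \<psi> \<sigma> \<phi> C)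
  then show ?case by (simp add: md_exp_unit ind_def et_while_unfold[of c \<psi> \<phi> C f \<sigma>] del: et.simps(6))
next
  case (pchoice C p D \<sigma>)
  then show ?case by (simp add: md_exp_pair)
next
  case (seq C \<sigma> r \<mu> D)
  have "md_exp (md_map (kappa D) \<mu>) (econf c f) = md_exp \<mu> (econf c (et c D f))"
    by (simp add: md_exp_map_inj[OF inj_kappa] econf_kappa)
  then show ?case using seq.IH[of "et c D f"] by simp
qed (simp_all add: md_exp_unit ind_def)

definition probs_in_unit :: "'a md \<Rightarrow> bool" where
  "probs_in_unit m \<longleftrightarrow> (\<forall>q a. m (q, a) > 0 \<longrightarrow> 0 < q \<and> q \<le> 1)"

lemma finite_md_union_contributors:
  assumes "p summable_on I" "\<forall>i\<in>I. p i > 0" "\<forall>i\<in>I. probs_in_unit (m i)"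
  shows "finite {i\<in>I. m i (q / p i, a) \<noteq> 0}"
proof -
  have "q \<le> p i \<and> 0 < q" if "i \<in> I" "m i (q / p i, a) \<noteq> 0" for i
    using that assms(2,3) unfolding probs_in_unit_def
    by (fastforce simp: pos_divide_le_eq zero_less_divide_iff)
  then have "{i\<in>I. m i (q / p i, a) \<noteq> 0} \<subseteq> (if q > 0 then {i\<in>I. q \<le> p i} else {})"
    by auto
  then show ?thesis
    by (rule finite_subset) (simp add: finite_ge_of_summable_pos[OF assms(1,2)])
qed

lemma lstep_probs_in_unit: "lstep \<mu> w \<nu> \<Longrightarrow> probs_in_unit \<mu>"
proof (induction rule: lstep.induct)
  case (refl \<mu>)
  then show ?case by (auto simp: probs_in_unit_def is_mdist_def)
next
  case (single \<gamma> w \<mu>)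
  then show ?case by (simp add: probs_in_unit_def md_unit_def)
next
  case (union I M W N p w)
  show ?case unfolding probs_in_unit_def
  proof (intro allI impI)
    fix q a assume "0 < md_union I p M (q, a)"
    then have "\<exists>i\<in>I. M i (q / p i, a) \<noteq> 0"
      using infsum_0[of I "\<lambda>i. M i (q / p i, a)"] by (force simp: md_union_def)
    then obtain i where i: "i \<in> I" "M i (q / p i, a) \<noteq> 0"
      by blast
    have "p i \<le> infsum p I"
      using union.hyps i(1) finite_sum_le_infsum[of p I "{i}"] by (auto intro: less_imp_le)
    moreover have "0 < q / p i" "q / p i \<le> 1"
      using union.IH i unfolding probs_in_unit_def by auto
    ultimately show "0 < q \<and> q \<le> 1"
      using union.hyps(1,3) i(1) by (auto simp: pos_divide_le_eq zero_less_divide_iff)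
  qed
qed

lemma lstep_sound:
  "lstep \<mu> w \<nu> \<Longrightarrow> ind c * ennreal w + md_exp \<nu> (econf c f) \<le> md_exp \<mu> (econf c f)"
proof (induction rule: lstep.induct)
  case (single \<gamma> w \<mu>)
  then show ?case using cstep_sound by (simp add: md_exp_unit)
next
  case (union I M W N p w)
  let ?g = "econf c f"
  have cost: "ennreal w \<le> infsum (\<lambda>i. ennreal (p i) * ennreal (W i)) I"
    using ennreal_le_infsum_of_has_sum[OF union.hyps(4)] union.hyps(1)
    by (simp add: ennreal_mult' less_imp_le cong: infsum_cong)
  have "ind c * ennreal w + md_exp (md_union I p N) ?g
      \<le> ind c * infsum (\<lambda>i. ennreal (p i) * ennreal (W i)) I
        + infsum (\<lambda>i. ennreal (p i) * md_exp (N i) ?g) I"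
    using union.hyps(1) by (intro add_mono mult_left_mono cost md_exp_union_le) simp_all
  also have "\<dots> = infsum (\<lambda>i. ennreal (p i) * (ind c * ennreal (W i) + md_exp (N i) ?g)) I"
    by (simp add: infsum_cmult_right_ennreal[symmetric] infsum_add[symmetric]
                  distrib_left mult.left_commute)
  also have "\<dots> \<le> infsum (\<lambda>i. ennreal (p i) * md_exp (M i) ?g) I"
    using union.IH by (intro infsum_mono_ennreal mult_left_mono) auto
  also have "\<dots> = md_exp (md_union I p M) ?g"
    using union.hyps union.IH
    by (intro md_exp_union[symmetric] finite_md_union_contributors) (auto intro: lstep_probs_in_unit)
  finally show ?case .
qed simp

theorem mainTheorem4:
  fixes \<mu> \<nu> :: "('v::finite) conf md" and w :: real and f :: "'v expect" and c :: bool
  assumes "mdist_conf \<mu>" and "mdist_conf \<nu>" and "w \<ge> 0" and "lstep \<mu> w \<nu>"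
  shows "md_exp \<mu> (econf c f) \<ge> ind c * ennreal w + md_exp \<nu> (econf c f)"
  using lstep_sound[OF assms(4)] by simp

end
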